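(* Let $n\ge1$ and $t\ge1$ be integers, and let $\Gamma_{\le t}=\{a\subseteq[n]: 0<|a|\le t\}$. Let $M_t$ be the real matrix with rows and columns indexed by $\Gamma_{\le t}$ and entries $M_t[a,b]=2^{|a\cap b|}$. Then $M_t$ is positive definite. *)

theory Defs
  imports Complex_Main
begin

definition pos_def_on :: "'i set \<Rightarrow> ('i \<Rightarrow> 'i \<Rightarrow> real) \<Rightarrow> bool" where
  "pos_def_on I M \<longleftrightarrow>
     (\<forall>a\<in>I. \<forall>b\<in>I. M a b = M b a) \<and>
     (\<forall>x :: 'i \<Rightarrow> real. (\<exists>a\<in>I. x a \<noteq> 0) \<longrightarrow>
        (\<Sum>a\<in>I. \<Sum>b\<in>I. x a * M a b * x b) > 0)"

definition Gamma_le :: "nat \<Rightarrow> nat \<Rightarrow> nat set set" where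
  "Gamma_le n t = {a. a \<subseteq> {1..n} \<and> 0 < card a \<and> card a \<le> t}"

definition M_t :: "nat set \<Rightarrow> nat set \<Rightarrow> real" where
  "M_t a b = 2 ^ card (a \<inter> b)"

end

theory Submission
  imports Defs
begin

text \<open>Counting the common subsets of a and b gives
  2 ^ card (a \<inter> b) = \<Sum>c. [c \<subseteq> a] [c \<subseteq> b], so the quadratic form of M_t is
  \<Sum>c (\<Sum>a \<supseteq> c. x a)^2. If a0 is inclusion-maximal among the a with x a \<noteq> 0, the
  inner sum for c = a0 is just x a0, hence the form is positive.
  Only finiteness of the index family matters.\<close>

lemma two_power_card_Int_eq_sum_Pow:
  assumes "finite U" and "a \<subseteq> U" and "b \<subseteq> U"
  shows "(2::real) ^ card (a \<inter> b) = (\<Sum>c\<in>Pow U. of_bool (c \<subseteq> a) * of_bool (c \<subseteq> b))"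
proof -
  have "Pow U \<inter> {c. c \<subseteq> a} \<inter> {c. c \<subseteq> b} = Pow (a \<inter> b)"
    using assms by auto
  then have "(\<Sum>c\<in>Pow U. of_bool (c \<subseteq> a) * of_bool (c \<subseteq> b)) = real (card (Pow (a \<inter> b)))"
    using assms by simp
  also have "\<dots> = 2 ^ card (a \<inter> b)"
    using card_Pow[of "a \<inter> b"] assms by (simp add: finite_subset)
  finally show ?thesis by simp
qed

lemma M_t_quadratic_form_eq_sum_squares:
  assumes "finite U" and "finite I" and "\<And>a. a \<in> I \<Longrightarrow> a \<subseteq> U"
  shows "(\<Sum>a\<in>I. \<Sum>b\<in>I. x a * M_t a b * x b) = (\<Sum>c\<in>Pow U. (\<Sum>a\<in>{a\<in>I. c \<subseteq> a}. x a)\<^sup>2)"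
proof -
  have "(\<Sum>a\<in>I. \<Sum>b\<in>I. x a * M_t a b * x b)
      = (\<Sum>a\<in>I. \<Sum>b\<in>I. \<Sum>c\<in>Pow U. (of_bool (c \<subseteq> a) * x a) * (of_bool (c \<subseteq> b) * x b))"
    using assms
    by (intro sum.cong refl)
       (simp only: M_t_def two_power_card_Int_eq_sum_Pow sum_distrib_left sum_distrib_right mult_ac)
  also have "\<dots> = (\<Sum>c\<in>Pow U. \<Sum>a\<in>I. \<Sum>b\<in>I. (of_bool (c \<subseteq> a) * x a) * (of_bool (c \<subseteq> b) * x b))"
    by (simp only: sum.swap[where B = "Pow U"])
  also have "\<dots> = (\<Sum>c\<in>Pow U. (\<Sum>a\<in>I. of_bool (c \<subseteq> a) * x a)\<^sup>2)"
    by (simp only: power2_eq_square sum_product)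
  also have "\<dots> = (\<Sum>c\<in>Pow U. (\<Sum>a\<in>{a\<in>I. c \<subseteq> a}. x a)\<^sup>2)"
    using assms by (simp add: Collect_conj_eq)
  finally show ?thesis .
qed

lemma sum_supersets_of_maximal:
  assumes "finite I" and "a0 \<in> I" and "\<And>a. a \<in> I \<Longrightarrow> a0 \<subset> a \<Longrightarrow> x a = 0"
  shows "(\<Sum>a\<in>{a\<in>I. a0 \<subseteq> a}. x a) = x a0"
proof -
  have "(\<Sum>a\<in>{a\<in>I. a0 \<subseteq> a}. x a) = (\<Sum>a\<in>{a0}. x a)"
    using assms by (intro sum.mono_neutral_right) auto
  then show ?thesis by simp
qed

lemma pos_def_on_M_t:
  fixes I :: "nat set set"
  assumes "finite I" and "\<And>a. a \<in> I \<Longrightarrow> finite a"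
  shows "pos_def_on I M_t"
  unfolding pos_def_on_def
proof (intro conjI allI impI ballI)
  fix a b show "M_t a b = M_t b a" by (simp add: M_t_def Int_commute)
next
  fix x :: "nat set \<Rightarrow> real"
  assume "\<exists>a\<in>I. x a \<noteq> 0"
  then obtain a0 where a0: "a0 \<in> I" "x a0 \<noteq> 0" and maximal: "\<And>a. a \<in> I \<Longrightarrow> a0 \<subset> a \<Longrightarrow> x a = 0"
    using finite_has_maximal[of "{a\<in>I. x a \<noteq> 0}"] \<open>finite I\<close> by fastforce
  have "finite (\<Union>I)" using assms by blast
  then have "0 < (\<Sum>c\<in>Pow (\<Union>I). (\<Sum>a\<in>{a\<in>I. c \<subseteq> a}. x a)\<^sup>2)"
    using a0 sum_supersets_of_maximal[OF \<open>finite I\<close> a0(1) maximal]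
    by (intro sum_pos2[of _ a0]) auto
  then show "0 < (\<Sum>a\<in>I. \<Sum>b\<in>I. x a * M_t a b * x b)"
    using M_t_quadratic_form_eq_sum_squares[OF \<open>finite (\<Union>I)\<close> \<open>finite I\<close> Union_upper] by simp
qed

theorem lemma6:
  fixes n t :: nat
  assumes "n \<ge> 1" and "t \<ge> 1"
  shows "pos_def_on (Gamma_le n t) M_t"
proof (rule pos_def_on_M_t)
  show "finite (Gamma_le n t)"
    by (rule finite_subset[of _ "Pow {1..n}"]) (auto simp: Gamma_le_def)
  show "finite a" if "a \<in> Gamma_le n t" for a
    using that by (auto simp: Gamma_le_def intro: finite_subset)
qed

end
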